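(* Let $d\ge2$, $H=\sum_{k=0}^{d-1}h_k|k\rangle\langle k|$ Hermitian on $\mathbb{C}^d$, $\rho_0$ a density matrix and $U_\tau$ a unitary on $\mathbb{C}^d$. For the cyclic process $H_0=H_\tau=H$, $$\big|\langle w_\tau^2\rangle_{\mathrm{MH}}-\langle w_\tau^2\rangle_{\mathrm{TPM}}\big|\le \frac{C_{l_1}(\rho_0)}{2}\Big(\mathrm{Tr}\,H^2+2\max_k|h_k|\,\mathrm{Tr}|H|\Big).$$ Moreover, if $d=2$ then $\langle w_\tau^2\rangle_{\mathrm{MH}}=\langle w_\tau^2\rangle_{\mathrm{TPM}}$ for every qubit state $\rho_0$, every $2\times2$ unitary $U_\tau$ and every $H$.
   Context: Setting: cyclic process with Hamiltonian $H$ (eigenbasis $\{|n\rangle\}$, $\Pi_n=|n\rangle\langle n|$) and unitary $U_\tau$. The TPM joint probability is $P^{\mathrm{TPM}}(m,n)=\mathrm{Tr}[\Pi_m U_\tau \Pi_n\rho_0\Pi_n U_\tau^\dagger \Pi_m]$ and the Margenau–Hill quasiprobability is $P^{\mathrm{MH}}(m,n)=\mathrm{Re}\,\mathrm{Tr}[U_\tau^\dagger \Pi_m U_\tau \Pi_n \rho_0]$; moments are $\langle w_\tau^k\rangle_{\mathcal O}=\sum_{m,n}P^{\mathcal O}(m,n)(h_m-h_n)^k$. Equivalently $\langle w_\tau^2\rangle_{\mathrm{TPM}}=\mathrm{Tr}[\Delta(\rho_0)(U_\tau^\dagger HU_\tau-H)^2]$ and $\langle w_\tau^2\rangle_{\mathrm{MH}}=\mathrm{Tr}[\rho_0(U_\tau^\dagger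 HU_\tau-H)^2]$, with $\Delta(\rho)=\sum_n\Pi_n\rho\Pi_n$. $C_{l_1}(\rho)=\sum_{i\ne j}|\langle i|\rho|j\rangle|$ is the $l_1$-coherence in the basis $\{|k\rangle\}$; $\mathrm{Tr}|H|=\sum_k|h_k|$. *)

theory Defs
  imports "Jordan_Normal_Form.Matrix"
begin

definition mtrace :: "complex mat \<Rightarrow> complex" where
  "mtrace A = (\<Sum>i<dim_row A. A $$ (i,i))"

definition dag :: "complex mat \<Rightarrow> complex mat" where
  "dag A = mat (dim_col A) (dim_row A) (\<lambda>(i,j). cnj (A $$ (j,i)))"

definition unitary_mat :: "nat \<Rightarrow> complex mat \<Rightarrow> bool" where
  "unitary_mat d U \<longleftrightarrow> U \<in> carrier_mat d d \<and> U * dag U = 1\<^sub>m d \<and> dag U * U = 1\<^sub>m d"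

definition density_mat :: "nat \<Rightarrow> complex mat \<Rightarrow> bool" where
  "density_mat d \<rho> \<longleftrightarrow> \<rho> \<in> carrier_mat d d \<and> dag \<rho> = \<rho> \<and> mtrace \<rho> = 1 \<and>
     (\<forall>v \<in> carrier_vec d.
        let q = (\<Sum>i<d. \<Sum>j<d. cnj (v $ i) * \<rho> $$ (i,j) * v $ j) in Im q = 0 \<and> Re q \<ge> 0)"

definition hamil :: "nat \<Rightarrow> (nat \<Rightarrow> real) \<Rightarrow> complex mat" where
  "hamil d h = mat d d (\<lambda>(i,j). if i = j then complex_of_real (h i) else 0)"

definition proj :: "nat \<Rightarrow> nat \<Rightarrow> complex mat" where
  "proj d n = mat d d (\<lambda>(i,j). if i = n \<and> j = n then 1 else 0)"

definition P_TPM :: "nat \<Rightarrow> complex mat \<Rightarrow> complex mat \<Rightarrow> nat \<Rightarrow> nat \<Rightarrow> real" where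
  "P_TPM d U \<rho> m n = Re (mtrace (proj d m * U * proj d n * \<rho> * proj d n * dag U * proj d m))"

definition P_MH :: "nat \<Rightarrow> complex mat \<Rightarrow> complex mat \<Rightarrow> nat \<Rightarrow> nat \<Rightarrow> real" where
  "P_MH d U \<rho> m n = Re (mtrace (dag U * proj d m * U * proj d n * \<rho>))"

definition w2_TPM :: "nat \<Rightarrow> (nat \<Rightarrow> real) \<Rightarrow> complex mat \<Rightarrow> complex mat \<Rightarrow> real" where
  "w2_TPM d h U \<rho> = (\<Sum>m<d. \<Sum>n<d. P_TPM d U \<rho> m n * (h m - h n)^2)"

definition w2_MH :: "nat \<Rightarrow> (nat \<Rightarrow> real) \<Rightarrow> complex mat \<Rightarrow> complex mat \<Rightarrow> real" where
  "w2_MH d h U \<rho> = (\<Sum>m<d. \<Sum>n<d. P_MH d U \<rho> m n * (h m - h n)^2)"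

definition C_l1 :: "nat \<Rightarrow> complex mat \<Rightarrow> real" where
  "C_l1 d \<rho> = (\<Sum>i<d. \<Sum>j\<in>{..<d} - {i}. cmod (\<rho> $$ (i,j)))"

definition trH2 :: "nat \<Rightarrow> (nat \<Rightarrow> real) \<Rightarrow> real" where
  "trH2 d h = Re (mtrace (hamil d h * hamil d h))"

definition trAbsH :: "nat \<Rightarrow> (nat \<Rightarrow> real) \<Rightarrow> real" where
  "trAbsH d h = (\<Sum>k<d. \<bar>h k\<bar>)"

end

theory Submission
  imports Defs
begin

text \<open>The Margenau--Hill quasiprobability of (m, n) is the real part of
  \<open>\<Sum>j. U(m,n) \<rho>(n,j) cnj U(m,j)\<close>, and its diagonal term j = n is exactly the TPM
  probability, so the two second moments differ only by the coherences \<open>\<rho>(n,j)\<close>, j \<noteq> n.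
  For fixed j \<noteq> n these terms sum to zero over m (columns n and j of U are orthogonal), which
  removes the \<open>h(n)\<^sup>2\<close> part of \<open>(h(m) - h(n))\<^sup>2\<close>; what remains is bounded using
  \<open>|U(m,n)| |U(m,j)| \<le> 1/2\<close>, as the rows of U are unit vectors. For a qubit the two remaining
  coherence contributions cancel, by the same orthogonality and the Hermiticity of \<open>\<rho>\<close>.\<close>

lemma index_mult_square_mat:
  assumes "A \<in> carrier_mat d d" "B \<in> carrier_mat d d" "i < d" "j < d"
  shows "(A * B) $$ (i, j) = (\<Sum>k<d. A $$ (i, k) * B $$ (k, j))"
  using assms by (simp add: scalar_prod_def lessThan_atLeast0)

lemma mult_square_carrier_mat [simp]:
  "A \<in> carrier_mat d d \<Longrightarrow> B \<in> carrier_mat d d \<Longrightarrow> A * B \<in> carrier_mat d d"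
  by (rule mult_carrier_mat)

lemma proj_carrier_mat [simp]: "proj d n \<in> carrier_mat d d"
  by (simp add: proj_def)

lemma dim_row_proj [simp]: "dim_row (proj d n) = d"
  by (simp add: proj_def)

lemma dim_row_dag [simp]: "dim_row (dag A) = dim_col A"
  by (simp add: dag_def)

lemma dag_carrier_mat [simp]: "A \<in> carrier_mat d d \<Longrightarrow> dag A \<in> carrier_mat d d"
  by (simp add: dag_def)

lemma index_dag_mat [simp]:
  "A \<in> carrier_mat d d \<Longrightarrow> i < d \<Longrightarrow> j < d \<Longrightarrow> dag A $$ (i, j) = cnj (A $$ (j, i))"
  by (simp add: dag_def)

lemma index_proj_mult:
  assumes "A \<in> carrier_mat d d" "i < d" "j < d"
  shows "(proj d n * A) $$ (i, j) = (if i = n then A $$ (n, j) else 0)"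
  using assms by (simp add: index_mult_square_mat[of _ d] proj_def if_distrib[of "\<lambda>x. x * _"]
      if_distrib[of "\<lambda>x. _ * x"] del: index_mult_mat(1) cong: if_cong)

lemma index_mult_proj:
  assumes "A \<in> carrier_mat d d" "i < d" "j < d"
  shows "(A * proj d n) $$ (i, j) = (if j = n then A $$ (i, n) else 0)"
  using assms by (simp add: index_mult_square_mat[of _ d] proj_def if_distrib[of "\<lambda>x. x * _"]
      if_distrib[of "\<lambda>x. _ * x"] del: index_mult_mat(1) cong: if_cong)

definition interference_term :: "complex mat \<Rightarrow> complex mat \<Rightarrow> nat \<Rightarrow> nat \<Rightarrow> nat \<Rightarrow> complex" where
  "interference_term U \<rho> m n j = U $$ (m, n) * \<rho> $$ (n, j) * cnj (U $$ (m, j))"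

lemma P_MH_eq_sum_interference_terms:
  assumes U: "U \<in> carrier_mat d d" and \<rho>: "\<rho> \<in> carrier_mat d d" and "m < d" "n < d"
  shows "P_MH d U \<rho> m n = (\<Sum>j<d. Re (interference_term U \<rho> m n j))"
proof -
  have "(dag U * proj d m) $$ (i, k) = (if k = m then cnj (U $$ (m, i)) else 0)"
    if "i < d" "k < d" for i k
    using that assms by (simp add: index_mult_proj)
  then have "(dag U * proj d m * U) $$ (i, k) = cnj (U $$ (m, i)) * U $$ (m, k)"
    if "i < d" "k < d" for i k
    using that assms by (simp add: index_mult_square_mat[OF _ U] if_distrib[of "\<lambda>x. x * _"]
        del: index_mult_mat(1) cong: if_cong)
  then have "(dag U * proj d m * U * proj d n * \<rho>) $$ (i, i) = interference_term U \<rho> m n i"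
    if "i < d" for i
    using that assms by (simp add: index_mult_square_mat[OF _ \<rho>] index_mult_proj interference_term_def
        if_distrib[of "\<lambda>x. x * _"] del: index_mult_mat(1) cong: if_cong)
  then show ?thesis
    using U by (simp add: P_MH_def mtrace_def Re_sum)
qed

lemma P_TPM_eq_interference_term:
  assumes U: "U \<in> carrier_mat d d" and \<rho>: "\<rho> \<in> carrier_mat d d" and "m < d" "n < d"
  shows "P_TPM d U \<rho> m n = Re (interference_term U \<rho> m n n)"
proof -
  have "(proj d m * U * proj d n) $$ (i, k) = (if i = m \<and> k = n then U $$ (m, n) else 0)"
    if "i < d" "k < d" for i k
    using that assms by (simp add: index_mult_proj index_proj_mult del: index_mult_mat(1))
  then have "(proj d m * U * proj d n * \<rho> * proj d n) $$ (i, k) =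
      (if i = m \<and> k = n then U $$ (m, n) * \<rho> $$ (n, n) else 0)" if "i < d" "k < d" for i k
    using that assms by (simp add: index_mult_square_mat[OF _ \<rho>] index_mult_proj
        if_distrib[of "\<lambda>x. x * _"] del: index_mult_mat(1) cong: if_cong)
  then have "(proj d m * U * proj d n * \<rho> * proj d n * dag U * proj d m) $$ (i, i) =
      (if i = m then interference_term U \<rho> m n n else 0)" if "i < d" for i
    using that assms by (simp add: index_mult_square_mat[OF _ dag_carrier_mat[OF U]] index_mult_proj
        interference_term_def if_distrib[of "\<lambda>x. x * _"] del: index_mult_mat(1) cong: if_cong)
  then show ?thesis
    using assms by (simp add: P_TPM_def mtrace_def)
qed

lemma P_MH_minus_P_TPM:
  assumes "U \<in> carrier_mat d d" "\<rho> \<in> carrier_mat d d" "m < d" "n < d"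
  shows "P_MH d U \<rho> m n - P_TPM d U \<rho> m n =
    (\<Sum>j \<in> {..<d} - {n}. Re (interference_term U \<rho> m n j))"
  using assms by (simp add: P_MH_eq_sum_interference_terms P_TPM_eq_interference_term
      sum.remove[of "{..<d}" n])

lemma w2_MH_minus_w2_TPM:
  assumes "U \<in> carrier_mat d d" "\<rho> \<in> carrier_mat d d"
  shows "w2_MH d h U \<rho> - w2_TPM d h U \<rho> =
    (\<Sum>n<d. \<Sum>j \<in> {..<d} - {n}. \<Sum>m<d. (h m - h n)^2 * Re (interference_term U \<rho> m n j))"
proof -
  have "w2_MH d h U \<rho> - w2_TPM d h U \<rho> =
      (\<Sum>m<d. \<Sum>n<d. (h m - h n)^2 * (\<Sum>j \<in> {..<d} - {n}. Re (interference_term U \<rho> m n j)))"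
    unfolding w2_MH_def w2_TPM_def sum_subtractf[symmetric]
    using assms by (intro sum.cong refl) (simp add: P_MH_minus_P_TPM[symmetric] algebra_simps)
  also have "\<dots> = (\<Sum>n<d. \<Sum>m<d. \<Sum>j \<in> {..<d} - {n}. (h m - h n)^2 * Re (interference_term U \<rho> m n j))"
    by (subst sum.swap) (simp add: sum_distrib_left)
  also have "\<dots> = (\<Sum>n<d. \<Sum>j \<in> {..<d} - {n}. \<Sum>m<d. (h m - h n)^2 * Re (interference_term U \<rho> m n j))"
    by (intro sum.cong refl sum.swap)
  finally show ?thesis .
qed

lemma unitary_columns_orthogonal:
  assumes "unitary_mat d U" "j < d" "n < d" "j \<noteq> n"
  shows "(\<Sum>m<d. cnj (U $$ (m, j)) * U $$ (m, n)) = 0"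
proof -
  have U: "U \<in> carrier_mat d d" and "(dag U * U) $$ (j, n) = 0"
    using assms by (auto simp: unitary_mat_def)
  then show ?thesis
    using assms by (simp add: index_mult_square_mat[OF dag_carrier_mat[OF U] U] del: index_mult_mat(1))
qed

lemma unitary_row_norm:
  assumes "unitary_mat d U" "m < d"
  shows "(\<Sum>k<d. (cmod (U $$ (m, k)))^2) = 1"
proof -
  have U: "U \<in> carrier_mat d d" and "(U * dag U) $$ (m, m) = 1"
    using assms by (auto simp: unitary_mat_def)
  then have "(\<Sum>k<d. U $$ (m, k) * cnj (U $$ (m, k))) = 1"
    using assms by (simp add: index_mult_square_mat[OF U dag_carrier_mat[OF U]] del: index_mult_mat(1))
  then have "complex_of_real (\<Sum>k<d. (cmod (U $$ (m, k)))^2) = 1"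
    by (simp only: of_real_sum complex_norm_square)
  then show ?thesis
    using of_real_eq_1_iff by blast
qed

lemma unitary_row_entries_norm_mult_le:
  assumes "unitary_mat d U" "m < d" "n < d" "j < d" "j \<noteq> n"
  shows "cmod (U $$ (m, n)) * cmod (U $$ (m, j)) \<le> 1 / 2"
proof -
  have "(\<Sum>k \<in> {n, j}. (cmod (U $$ (m, k)))^2) \<le> (\<Sum>k<d. (cmod (U $$ (m, k)))^2)"
    by (rule sum_mono2) (use assms in auto)
  then have "(cmod (U $$ (m, n)))^2 + (cmod (U $$ (m, j)))^2 \<le> 1"
    using unitary_row_norm[OF assms(1,2)] assms(5) by simp
  moreover have "0 \<le> (cmod (U $$ (m, n)) - cmod (U $$ (m, j)))^2"
    by simp
  ultimately show ?thesis
    by (simp add: power2_diff)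
qed

lemma sum_interference_terms_eq_0:
  assumes "unitary_mat d U" "j < d" "n < d" "j \<noteq> n"
  shows "(\<Sum>m<d. interference_term U \<rho> m n j) = 0"
proof -
  have "(\<Sum>m<d. interference_term U \<rho> m n j) = \<rho> $$ (n, j) * (\<Sum>m<d. cnj (U $$ (m, j)) * U $$ (m, n))"
    unfolding interference_term_def sum_distrib_left by (intro sum.cong refl) (simp add: algebra_simps)
  then show ?thesis
    using unitary_columns_orthogonal[OF assms] by simp
qed

lemma norm_interference_term_le:
  assumes "unitary_mat d U" "m < d" "n < d" "j < d" "j \<noteq> n"
  shows "cmod (interference_term U \<rho> m n j) \<le> cmod (\<rho> $$ (n, j)) / 2"
proof -
  have "cmod (interference_term U \<rho> m n j) = cmod (\<rho> $$ (n, j)) * (cmod (U $$ (m, n)) * cmod (U $$ (m, j)))"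
    by (simp add: interference_term_def norm_mult)
  also have "\<dots> \<le> cmod (\<rho> $$ (n, j)) * (1 / 2)"
    using unitary_row_entries_norm_mult_le[OF assms] by (intro mult_left_mono) simp_all
  finally show ?thesis
    by simp
qed

lemma density_mat_hermitian:
  assumes "density_mat d \<rho>" "i < d" "j < d"
  shows "\<rho> $$ (i, j) = cnj (\<rho> $$ (j, i))"
proof -
  have "\<rho> \<in> carrier_mat d d" "dag \<rho> = \<rho>"
    using assms(1) by (auto simp: density_mat_def)
  then show ?thesis
    using assms(2,3) index_dag_mat by metis
qed

lemma interference_term_swap:
  assumes "density_mat d \<rho>" "n < d" "j < d"
  shows "interference_term U \<rho> m j n = cnj (interference_term U \<rho> m n j)"
  using density_mat_hermitian[OF assms(1,3,2)] by (simp add: interference_term_def)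

lemma sum_sq_diff_mult_eq:
  fixes a x :: "'i \<Rightarrow> real"
  assumes "(\<Sum>m\<in>A. x m) = 0"
  shows "(\<Sum>m\<in>A. (a m - c)^2 * x m) = (\<Sum>m\<in>A. ((a m)^2 - 2 * a m * c) * x m)"
proof -
  have "(\<Sum>m\<in>A. (a m - c)^2 * x m) = (\<Sum>m\<in>A. ((a m)^2 - 2 * a m * c) * x m + c^2 * x m)"
    by (intro sum.cong refl) (simp add: power2_diff algebra_simps)
  then show ?thesis
    unfolding sum.distrib sum_distrib_left[symmetric]
    using assms by simp
qed

lemma abs_sum_sq_diff_mult_le:
  fixes a x :: "'i \<Rightarrow> real"
  assumes "(\<Sum>m\<in>A. x m) = 0" "\<bar>c\<bar> \<le> M" "\<And>m. m \<in> A \<Longrightarrow> \<bar>x m\<bar> \<le> B"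
  shows "\<bar>\<Sum>m\<in>A. (a m - c)^2 * x m\<bar> \<le> B * (\<Sum>m\<in>A. (a m)^2 + 2 * \<bar>a m\<bar> * M)"
proof -
  have "0 \<le> M"
    using assms(2) by linarith
  have "\<bar>\<Sum>m\<in>A. ((a m)^2 - 2 * a m * c) * x m\<bar> \<le> (\<Sum>m\<in>A. \<bar>((a m)^2 - 2 * a m * c) * x m\<bar>)"
    by (rule sum_abs)
  also have "\<dots> \<le> (\<Sum>m\<in>A. ((a m)^2 + 2 * \<bar>a m\<bar> * M) * B)"
  proof (rule sum_mono)
    fix m assume "m \<in> A"
    have "\<bar>(a m)^2 - 2 * a m * c\<bar> \<le> (a m)^2 + 2 * \<bar>a m\<bar> * M"
      using assms(2) mult_left_mono[OF assms(2), of "\<bar>a m\<bar>"]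
      by (simp add: abs_mult abs_triangle_ineq4 order.trans[OF abs_triangle_ineq4])
    then show "\<bar>((a m)^2 - 2 * a m * c) * x m\<bar> \<le> ((a m)^2 + 2 * \<bar>a m\<bar> * M) * B"
      unfolding abs_mult by (rule mult_mono) (use assms(3)[OF \<open>m \<in> A\<close>] \<open>0 \<le> M\<close> in auto)
  qed
  finally show ?thesis
    unfolding sum_sq_diff_mult_eq[OF assms(1)] sum_distrib_left by (simp only: mult.commute)
qed

lemma trH2_eq_sum_squares: "trH2 d h = (\<Sum>k<d. (h k)^2)"
proof -
  have H: "hamil d h \<in> carrier_mat d d"
    by (simp add: hamil_def)
  have "hamil d h $$ (i, k) = (if i = k then complex_of_real (h i) else 0)" if "i < d" "k < d" for i k
    using that by (simp add: hamil_def)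
  then have "(hamil d h * hamil d h) $$ (i, i) = complex_of_real ((h i)^2)" if "i < d" for i
    using that by (simp add: index_mult_square_mat[OF H H] if_distrib[of "\<lambda>x. x * _"]
        power2_eq_square del: index_mult_mat(1) cong: if_cong)
  then show ?thesis
    using H by (simp add: trH2_def mtrace_def)
qed

lemma abs_coherence_contribution_le:
  assumes "unitary_mat d U" "n < d" "j < d" "j \<noteq> n" "\<And>k. k < d \<Longrightarrow> \<bar>h k\<bar> \<le> M"
  shows "\<bar>\<Sum>m<d. (h m - h n)^2 * Re (interference_term U \<rho> m n j)\<bar>
    \<le> cmod (\<rho> $$ (n, j)) / 2 * (\<Sum>m<d. (h m)^2 + 2 * \<bar>h m\<bar> * M)"
proof (rule abs_sum_sq_diff_mult_le)
  show "(\<Sum>m<d. Re (interference_term U \<rho> m n j)) = 0"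
    using sum_interference_terms_eq_0[OF assms(1,3,2,4)] by (metis Re_sum zero_complex.sel(1))
  show "\<bar>Re (interference_term U \<rho> m n j)\<bar> \<le> cmod (\<rho> $$ (n, j)) / 2" if "m \<in> {..<d}" for m
    using abs_Re_le_cmod norm_interference_term_le[OF assms(1) _ assms(2-4)] that
    by (metis lessThan_iff order.trans)
qed (use assms in auto)

lemma abs_w2_MH_minus_w2_TPM_le:
  assumes "unitary_mat d U" "\<rho> \<in> carrier_mat d d" "\<And>k. k < d \<Longrightarrow> \<bar>h k\<bar> \<le> M"
  shows "\<bar>w2_MH d h U \<rho> - w2_TPM d h U \<rho>\<bar> \<le> C_l1 d \<rho> / 2 * (trH2 d h + 2 * M * trAbsH d h)"
proof -
  have U: "U \<in> carrier_mat d d"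
    using assms(1) by (simp add: unitary_mat_def)
  define K where "K = (\<Sum>m<d. (h m)^2 + 2 * \<bar>h m\<bar> * M)"
  have "\<bar>w2_MH d h U \<rho> - w2_TPM d h U \<rho>\<bar>
      \<le> (\<Sum>n<d. \<Sum>j \<in> {..<d} - {n}. \<bar>\<Sum>m<d. (h m - h n)^2 * Re (interference_term U \<rho> m n j)\<bar>)"
    unfolding w2_MH_minus_w2_TPM[OF U assms(2)] by (rule order.trans[OF sum_abs sum_mono[OF sum_abs]])
  also have "\<dots> \<le> (\<Sum>n<d. \<Sum>j \<in> {..<d} - {n}. cmod (\<rho> $$ (n, j)) / 2 * K)"
    unfolding K_def by (intro sum_mono abs_coherence_contribution_le assms) auto
  also have "\<dots> = C_l1 d \<rho> / 2 * K"
    by (simp add: C_l1_def sum_distrib_right sum_divide_distrib)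
  also have "K = trH2 d h + 2 * M * trAbsH d h"
    by (simp add: K_def trH2_eq_sum_squares trAbsH_def sum.distrib sum_distrib_left algebra_simps)
  finally show ?thesis .
qed

lemma w2_MH_eq_w2_TPM_qubit:
  assumes "density_mat 2 \<rho>" "unitary_mat 2 U"
  shows "w2_MH 2 h U \<rho> = w2_TPM 2 h U \<rho>"
proof -
  let ?t = "interference_term U \<rho>"
  have U: "U \<in> carrier_mat 2 2" and \<rho>: "\<rho> \<in> carrier_mat 2 2"
    using assms by (auto simp: unitary_mat_def density_mat_def)
  have L: "{..<2::nat} = {0, 1}"
    by auto
  have "?t 0 0 1 + ?t 1 0 1 = 0"
    using sum_interference_terms_eq_0[OF assms(2), of 1 0] by (simp add: L)
  moreover have "Re (?t 0 1 0) = Re (?t 0 0 1)"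
    using interference_term_swap[OF assms(1), of 0 1] by simp
  ultimately have "Re (?t 1 0 1) + Re (?t 0 1 0) = 0"
    by (metis add.commute plus_complex.sel(1) zero_complex.sel(1))
  moreover have "w2_MH 2 h U \<rho> - w2_TPM 2 h U \<rho> = (h 1 - h 0)^2 * (Re (?t 1 0 1) + Re (?t 0 1 0))"
    unfolding w2_MH_minus_w2_TPM[OF U \<rho>] L by (simp add: insert_Diff_if power2_commute algebra_simps)
  ultimately show ?thesis
    by simp
qed

lemma abs_le_Max_abs:
  fixes h :: "nat \<Rightarrow> real"
  assumes "k < d"
  shows "\<bar>h k\<bar> \<le> Max {\<bar>h k\<bar> | k. k < d}"
proof -
  have "{\<bar>h k\<bar> | k. k < d} = (\<lambda>k. \<bar>h k\<bar>) ` {..<d}"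
    by auto
  then show ?thesis
    using assms by (intro Max_ge) auto
qed

theorem theorem2:
  fixes d :: nat and h :: "nat \<Rightarrow> real" and \<rho> U :: "complex mat"
  assumes "d \<ge> 2" and "density_mat d \<rho>" and "unitary_mat d U"
  shows "\<bar>w2_MH d h U \<rho> - w2_TPM d h U \<rho>\<bar>
           \<le> C_l1 d \<rho> / 2 * (trH2 d h + 2 * Max {\<bar>h k\<bar> | k. k < d} * trAbsH d h)
         \<and> (d = 2 \<longrightarrow> w2_MH d h U \<rho> = w2_TPM d h U \<rho>)"
proof
  have "\<rho> \<in> carrier_mat d d"
    using assms(2) by (simp add: density_mat_def)
  then show "\<bar>w2_MH d h U \<rho> - w2_TPM d h U \<rho>\<bar>
      \<le> C_l1 d \<rho> / 2 * (trH2 d h + 2 * Max {\<bar>h k\<bar> | k. k < d} * trAbsH d h)"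
    using abs_w2_MH_minus_w2_TPM_le[OF assms(3)] abs_le_Max_abs by blast
  show "d = 2 \<longrightarrow> w2_MH d h U \<rho> = w2_TPM d h U \<rho>"
    using w2_MH_eq_w2_TPM_qubit assms(2,3) by blast
qed

end
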